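(* Let $p$ be a positive integer, $r\ge2$ an integer, $s=p+2r$, and $M=(m_{ij})\in\mathfrak{so}(r,\mathbb{C})$. Let $S$ be the $(r-1)\times r$ matrix $S=\big(I_{r-1}\mid m\big)$ whose last column is $m=(m_{1r},\dots,m_{r-1,r})^t$. Define $\hat\Phi^*:V^*_{ps}(\mathbb{R})\to\mathbb{C}^{(r-1)\times p}$ by $\hat\Phi^*(X)=S(W+M\bar W)Z^{-1}$, where for $X=(X_0;X_1;X_2;X_3)$ (blocks of $p,p,r,r$ rows) $Z=X_0+iX_1$ and $W=X_2+iX_3$. Then $\hat\Phi^*$ is independent of the last row of $X$, thus inducing a map $\Phi^*:V^*_{p,s-1}(\mathbb{R})\to\mathbb{C}^{(r-1)\times p}$, and the complex valued components of $\Phi^*$ form an orthogonal harmonic family of $\mathbf{GL}_p(\mathbb{R})$-invariant functions on $V^*_{p,s-1}(\mathbb{R})$, equipped with the Euclidean metric.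
   Context: $\mathfrak{so}(r,\mathbb{C})$ is the set of complex skew-symmetric $r\times r$ matrices. For $n\ge p$, $U^*_{pn}(\mathbb{R})=\{X\in\mathbb{R}^{(p+n)\times p}: X^tX\text{ invertible}\}$ and $V^*_{pn}(\mathbb{R})=\{X\in U^*_{pn}(\mathbb{R}): \det(X_0+iX_1)\neq0\}$, where $X_0,X_1$ are the first and second blocks of $p$ rows; $V^*_{p,s-1}(\mathbb{R})$ is identified with matrices obtained from elements of $V^*_{ps}(\mathbb{R})$ by deleting the last row. $\mathbf{GL}_p(\mathbb{R})$ acts by right multiplication. The Euclidean metric is $\langle X,Y\rangle=\mathrm{trace}(X^tY)$. For a Riemannian manifold $(M,g)$ and complex functions $\phi,\psi$, $\tau(\phi)$ is the Laplace–Beltrami operator (extended complex-linearly) and $\kappa(\phi,\psi)=g(\mathrm{grad}\,\phi,\mathrm{grad}\,\psi)$ with $g$ extended complex-bilinearly. A set $\Omega$ of complex functions is an orthogonal harmonic family if $\tau(\phi)=0$ and $\kappa(\phi,\psi)=0$ for all $\phi,\psi\in\Omega$. *)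

theory Defs
  imports "HOL-Analysis.Analysis" "Jordan_Normal_Form.Gauss_Jordan_Elimination"
    "Jordan_Normal_Form.Determinant"
begin

definition cmat :: "real mat \<Rightarrow> complex mat" where
  "cmat X = map_mat complex_of_real X"

definition cconj_mat :: "complex mat \<Rightarrow> complex mat" where
  "cconj_mat W = map_mat cnj W"

definition row_block :: "'a mat \<Rightarrow> nat \<Rightarrow> nat \<Rightarrow> 'a mat" where
  "row_block X a k = mat k (dim_col X) (\<lambda>(i,j). X $$ (a + i, j))"

definition U_star :: "nat \<Rightarrow> nat \<Rightarrow> real mat set" where
  "U_star p n = {X. X \<in> carrier_mat (p + n) p \<and> invertible_mat (transpose_mat X * X)}"

definition Zmat :: "nat \<Rightarrow> real mat \<Rightarrow> complex mat" where
  "Zmat p X = cmat (row_block X 0 p) + \<i> \<cdot>\<^sub>m cmat (row_block X p p)"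

definition V_star :: "nat \<Rightarrow> nat \<Rightarrow> real mat set" where
  "V_star p n = {X \<in> U_star p n. det (Zmat p X) \<noteq> 0}"

definition delete_last_row :: "'a mat \<Rightarrow> 'a mat" where
  "delete_last_row X = mat (dim_row X - 1) (dim_col X) (\<lambda>(i,j). X $$ (i, j))"

text \<open>V*_{p,s-1}: matrices obtained from elements of V*_{p,s} by deleting the last row.\<close>
definition V_star_del :: "nat \<Rightarrow> nat \<Rightarrow> real mat set" where
  "V_star_del p s = delete_last_row ` V_star p s"

definition append_zero_row :: "real mat \<Rightarrow> real mat" where
  "append_zero_row Y = mat (dim_row Y + 1) (dim_col Y)
     (\<lambda>(i,j). if i < dim_row Y then Y $$ (i, j) else 0)"

definition so_C :: "nat \<Rightarrow> complex mat set" where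
  "so_C r = {M. M \<in> carrier_mat r r \<and> transpose_mat M = - M}"

definition S_mat :: "nat \<Rightarrow> complex mat \<Rightarrow> complex mat" where
  "S_mat r M = mat (r - 1) r
     (\<lambda>(i,j). if j = r - 1 then M $$ (i, r - 1) else if i = j then 1 else 0)"

definition Phi_hat :: "nat \<Rightarrow> nat \<Rightarrow> complex mat \<Rightarrow> real mat \<Rightarrow> complex mat" where
  "Phi_hat p r M X =
     (let Z = Zmat p X;
          W = cmat (row_block X (2*p) r) + \<i> \<cdot>\<^sub>m cmat (row_block X (2*p + r) r)
      in S_mat r M * (W + M * cconj_mat W) * the (mat_inverse Z))"

text \<open>The induced map on V*_{p,s-1} (any extension works by the independence claim;
  we use the extension by a zero last row).\<close>
definition Phi_star :: "nat \<Rightarrow> nat \<Rightarrow> complex mat \<Rightarrow> real mat \<Rightarrow> complex mat" where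
  "Phi_star p r M Y = Phi_hat p r M (append_zero_row Y)"

definition upd_entry :: "real mat \<Rightarrow> nat \<Rightarrow> nat \<Rightarrow> real \<Rightarrow> real mat" where
  "upd_entry X a b t = mat (dim_row X) (dim_col X)
     (\<lambda>(i,j). if i = a \<and> j = b then t else X $$ (i, j))"

definition pderiv_entry :: "(real mat \<Rightarrow> complex) \<Rightarrow> real mat \<Rightarrow> nat \<Rightarrow> nat \<Rightarrow> complex" where
  "pderiv_entry f X a b = vector_derivative (\<lambda>t. f (upd_entry X a b t)) (at (X $$ (a, b)))"

definition pderiv2_entry :: "(real mat \<Rightarrow> complex) \<Rightarrow> real mat \<Rightarrow> nat \<Rightarrow> nat \<Rightarrow> complex" where
  "pderiv2_entry f X a b =
     vector_derivative (\<lambda>t. pderiv_entry f (upd_entry X a b t) a b) (at (X $$ (a, b)))"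

text \<open>Laplace-Beltrami operator tau and conformality operator kappa of the Euclidean
  metric trace(X^t Y), extended complex-(bi)linearly.\<close>
definition tau_eucl :: "(real mat \<Rightarrow> complex) \<Rightarrow> real mat \<Rightarrow> complex" where
  "tau_eucl f X = (\<Sum>a<dim_row X. \<Sum>b<dim_col X. pderiv2_entry f X a b)"

definition kappa_eucl :: "(real mat \<Rightarrow> complex) \<Rightarrow> (real mat \<Rightarrow> complex) \<Rightarrow> real mat \<Rightarrow> complex" where
  "kappa_eucl f g X = (\<Sum>a<dim_row X. \<Sum>b<dim_col X. pderiv_entry f X a b * pderiv_entry g X a b)"

definition twice_coord_diff_on :: "real mat set \<Rightarrow> (real mat \<Rightarrow> complex) \<Rightarrow> bool" where
  "twice_coord_diff_on D f \<longleftrightarrow> (\<forall>X\<in>D. \<forall>a<dim_row X. \<forall>b<dim_col X.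
      (\<forall>t. upd_entry X a b t \<in> D \<longrightarrow>
         (\<lambda>u. f (upd_entry X a b u)) differentiable (at t)) \<and>
      (\<lambda>t. pderiv_entry f (upd_entry X a b t) a b) differentiable (at (X $$ (a, b))))"

definition orthogonal_harmonic_family :: "real mat set \<Rightarrow> (real mat \<Rightarrow> complex) set \<Rightarrow> bool" where
  "orthogonal_harmonic_family D \<Omega> \<longleftrightarrow>
     (\<forall>\<phi>\<in>\<Omega>. twice_coord_diff_on D \<phi> \<and> (\<forall>X\<in>D. tau_eucl \<phi> X = 0)) \<and>
     (\<forall>\<phi>\<in>\<Omega>. \<forall>\<psi>\<in>\<Omega>. \<forall>X\<in>D. kappa_eucl \<phi> \<psi> X = 0)"

definition GL_invariant_on :: "nat \<Rightarrow> real mat set \<Rightarrow> (real mat \<Rightarrow> complex) \<Rightarrow> bool" where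
  "GL_invariant_on p D f \<longleftrightarrow>
     (\<forall>X\<in>D. \<forall>g. g \<in> carrier_mat p p \<and> invertible_mat g \<longrightarrow> f (X * g) = f X)"

end

theory Submission
  imports Defs
begin

(* Write Z = X0 + i X1 and W = X2 + i X3.  As conj W = X2 - i X3, the numerator
   S (W + M conj W) equals S (I + M) X2 + i S (I - M) X3, and skew-symmetry of M kills the last
   column of S (I - M).  Hence Phi-hat = C Z^-1 with C real-linear in the rows of X that survive
   the deletion of the last one, and right multiplication by g replaces C, Z by C g, Z g.

   Along a coordinate line in the X2, X3 blocks Phi is affine.  Along a line in the X0 (resp. X1)
   block, Z moves by the rank-one matrix c t E with c = 1 (resp. i), so by the Sherman-Morrison
   formula Phi is a Moebius function of t, with first and second derivatives
   -c Phi_{k,alpha} N_{b,l} and 2 c^2 Phi_{k,alpha} N_{b,l} N_{b,alpha}, where N = Z^-1.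
   Since 1 + i^2 = 0 the X0 and X1 contributions cancel in both tau and kappa.  The X2, X3
   contributions vanish for tau, and for kappa they are multiples of the entries of
   S (I + M) (S (I + M))^t - S (I - M) (S (I - M))^t = S ((I + M) (I - M) - (I - M) (I + M)) S^t = 0. *)

lemma sum_lessThan_add:
  fixes f :: "nat \<Rightarrow> 'a::comm_monoid_add"
  shows "(\<Sum>a<m + n. f a) = (\<Sum>a<m. f a) + (\<Sum>a<n. f (m + a))"
  by (induction n) (simp_all add: add.assoc)

lemma index_mult_mat_sum:
  assumes "A \<in> carrier_mat m n" "B \<in> carrier_mat n q" "i < m" "j < q"
  shows "(A * B) $$ (i,j) = (\<Sum>c<n. A $$ (i,c) * B $$ (c,j))"
  using assms by (simp add: scalar_prod_def atLeast0LessThan)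

lemma mat_inverse_exists:
  fixes A :: "'a::field mat"
  assumes "A \<in> carrier_mat n n" "det A \<noteq> 0"
  obtains B where "mat_inverse A = Some B"
  using mat_inverse(1)[OF assms(1), of undefined] det_non_zero_imp_unit[OF assms, of undefined]
  by (cases "mat_inverse A") auto

lemma mat_inverse_eq_SomeI:
  fixes A B :: "'a::field mat"
  assumes A: "A \<in> carrier_mat n n" and B: "B \<in> carrier_mat n n" and AB: "A * B = 1\<^sub>m n"
  shows "mat_inverse A = Some B"
proof -
  have "det A \<noteq> 0" using det_mult[OF A B] AB by auto
  then obtain C where C: "mat_inverse A = Some C" using mat_inverse_exists[OF A] by blast
  with mat_inverse(2)[OF A C] have CA: "C * A = 1\<^sub>m n" and Cc: "C \<in> carrier_mat n n" by auto
  have "C = C * (A * B)" using Cc by (simp add: AB)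
  also have "\<dots> = (C * A) * B" using A B Cc by simp
  also have "\<dots> = B" using B CA by simp
  finally show ?thesis using C by simp
qed

lemma mat_inverse_rank_one_update:
  fixes Z N Z' :: "'a::field mat"
  assumes Z: "Z \<in> carrier_mat n n" and N: "mat_inverse Z = Some N" and Z': "Z' \<in> carrier_mat n n"
    and Z'_eq: "\<And>i j. i < n \<Longrightarrow> j < n \<Longrightarrow> Z' $$ (i,j) = Z $$ (i,j) + (if i = \<alpha> \<and> j = \<beta> then \<sigma> else 0)"
    and \<alpha>: "\<alpha> < n" and \<beta>: "\<beta> < n" and d: "1 + \<sigma> * N $$ (\<beta>,\<alpha>) \<noteq> 0"
  shows "mat_inverse Z' =
    Some (mat n n (\<lambda>(j,l). N $$ (j,l) - \<sigma> * N $$ (j,\<alpha>) * N $$ (\<beta>,l) / (1 + \<sigma> * N $$ (\<beta>,\<alpha>))))"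
    (is "_ = Some ?N'")
proof (rule mat_inverse_eq_SomeI[OF Z'])
  let ?d = "1 + \<sigma> * N $$ (\<beta>,\<alpha>)"
  have Nc: "N \<in> carrier_mat n n" and ZN: "Z * N = 1\<^sub>m n" using mat_inverse(2)[OF Z N] by auto
  have ZN_sum: "(\<Sum>j<n. Z $$ (i,j) * N $$ (j,l)) = (if i = l then 1 else 0)"
    if "i < n" "l < n" for i l
    using arg_cong[OF ZN, of "\<lambda>A. A $$ (i,l)"] index_mult_mat_sum[OF Z Nc that] that by simp
  show "Z' * ?N' = 1\<^sub>m n"
  proof (rule eq_matI)
    fix i l assume "i < dim_row (1\<^sub>m n :: 'a mat)" and "l < dim_col (1\<^sub>m n :: 'a mat)"
    hence i: "i < n" and l: "l < n" by auto
    have "(Z' * ?N') $$ (i,l) = (\<Sum>j<n. Z' $$ (i,j) * ?N' $$ (j,l))"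
      by (rule index_mult_mat_sum[OF Z' _ i l]) simp
    also have "\<dots> = (\<Sum>j<n. Z $$ (i,j) * ?N' $$ (j,l))
        + (\<Sum>j<n. (if i = \<alpha> \<and> j = \<beta> then \<sigma> else 0) * ?N' $$ (j,l))"
      by (simp add: Z'_eq i sum.distrib distrib_right)
    also have "(\<Sum>j<n. Z $$ (i,j) * ?N' $$ (j,l))
        = (\<Sum>j<n. Z $$ (i,j) * N $$ (j,l)) - (\<sigma> / ?d * N $$ (\<beta>,l)) * (\<Sum>j<n. Z $$ (i,j) * N $$ (j,\<alpha>))"
      using l by (simp add: sum_subtractf sum_distrib_left sum_divide_distrib algebra_simps)
    also have "(\<Sum>j<n. (if i = \<alpha> \<and> j = \<beta> then \<sigma> else 0) * ?N' $$ (j,l))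
        = (if i = \<alpha> then \<sigma> * ?N' $$ (\<beta>,l) else 0)"
      using \<beta> by (simp add: if_distrib[of "\<lambda>x. x * _"] sum.delta' cong: if_cong)
    also have "\<sigma> * ?N' $$ (\<beta>,l) = \<sigma> * N $$ (\<beta>,l) / ?d"
      using \<beta> l d by (simp add: field_simps)
    finally show "(Z' * ?N') $$ (i,l) = 1\<^sub>m n $$ (i,l)"
      using i l \<alpha> by (simp add: ZN_sum)
  qed (use Z' in auto)
qed simp

lemma vector_derivatives_of_real_restriction:
  fixes f :: "real \<Rightarrow> complex" and G G' :: "complex \<Rightarrow> complex"
  assumes U: "open U" "t \<in> U" and f_eq: "\<And>u. u \<in> U \<Longrightarrow> f u = G (of_real u)"
    and G: "\<And>u. u \<in> U \<Longrightarrow> (G has_field_derivative G' (of_real u)) (at (of_real u))"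
    and G': "(G' has_field_derivative G'') (at (of_real t))"
  shows "(f has_vector_derivative G' (of_real t)) (at t)"
    and "((\<lambda>u. vector_derivative f (at u)) has_vector_derivative G'') (at t)"
proof -
  have f': "(f has_vector_derivative G' (of_real u)) (at u)" if "u \<in> U" for u
    using has_vector_derivative_real_field[OF G[OF that]]
    by (rule has_vector_derivative_transform_within_open[OF _ U(1) that]) (simp add: f_eq)
  then show "(f has_vector_derivative G' (of_real t)) (at t)" using U(2) .
  show "((\<lambda>u. vector_derivative f (at u)) has_vector_derivative G'') (at t)"
    using has_vector_derivative_real_field[OF G']
    by (rule has_vector_derivative_transform_within_open[OF _ U])
      (simp add: vector_derivative_at[OF f'])
qed

lemma moebius_line_vector_derivatives:
  fixes f :: "real \<Rightarrow> complex" and F c R q :: complex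
  assumes f_eq: "\<And>u. 1 + c * of_real (u - t) * q \<noteq> 0 \<Longrightarrow>
      f u = F - c * of_real (u - t) * R / (1 + c * of_real (u - t) * q)"
  shows "(f has_vector_derivative - c * R) (at t)"
    and "((\<lambda>u. vector_derivative f (at u)) has_vector_derivative 2 * c\<^sup>2 * R * q) (at t)"
proof -
  define d where "d z = 1 + c * (z - of_real t) * q" for z
  define U where "U = {u. d (of_real u) \<noteq> 0}"
  have U: "open U" "t \<in> U"
    unfolding U_def d_def by (auto intro!: open_Collect_neq continuous_intros)
  have G: "((\<lambda>z. F - c * (z - of_real t) * R / d z) has_field_derivative - c * R / (d z)\<^sup>2) (at z)"
    if "d z \<noteq> 0" for z
    using that unfolding d_def
    by (auto intro!: derivative_eq_intros simp: field_simps power2_eq_square)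
  have G': "((\<lambda>z. - c * R / (d z)\<^sup>2) has_field_derivative 2 * c\<^sup>2 * R * q) (at (of_real t))"
    unfolding d_def
    by (auto intro!: derivative_eq_intros simp: field_simps power2_eq_square power3_eq_cube)
  note derivs = vector_derivatives_of_real_restriction[OF U _ _ G']
  show "(f has_vector_derivative - c * R) (at t)"
    using derivs(1)[of f] G f_eq by (simp add: U_def d_def)
  show "((\<lambda>u. vector_derivative f (at u)) has_vector_derivative 2 * c\<^sup>2 * R * q) (at t)"
    using derivs(2)[of f] G f_eq by (simp add: U_def d_def)
qed

lemma affine_line_vector_derivatives:
  fixes f :: "real \<Rightarrow> complex"
  assumes f_eq: "\<And>u. f u = F + of_real (u - t) * E"
  shows "(f has_vector_derivative E) (at t)"
    and "((\<lambda>u. vector_derivative f (at u)) has_vector_derivative 0) (at t)"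
proof -
  have f': "(f has_vector_derivative E) (at u)" for u
    unfolding f_eq[abs_def]
    by (auto intro!: derivative_eq_intros simp: has_vector_derivative_def scaleR_conv_of_real)
  then show "(f has_vector_derivative E) (at t)" .
  show "((\<lambda>u. vector_derivative f (at u)) has_vector_derivative 0) (at t)"
    by (simp add: vector_derivative_at[OF f'])
qed

lemma upd_entry_upd_entry [simp]:
  "a < dim_row Y \<Longrightarrow> b < dim_col Y \<Longrightarrow> upd_entry (upd_entry Y a b t) a b u = upd_entry Y a b u"
  by (rule eq_matI) (auto simp: upd_entry_def)

lemma upd_entry_index:
  "i < dim_row Y \<Longrightarrow> j < dim_col Y \<Longrightarrow>
    upd_entry Y a b u $$ (i,j) = (if i = a \<and> j = b then u else Y $$ (i,j))"
  by (simp add: upd_entry_def)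

lemma dim_upd_entry [simp]:
  "dim_row (upd_entry Y a b u) = dim_row Y" "dim_col (upd_entry Y a b u) = dim_col Y"
  by (simp_all add: upd_entry_def)

lemma upd_entry_carrier: "Y \<in> carrier_mat m n \<Longrightarrow> upd_entry Y a b u \<in> carrier_mat m n"
  by (intro carrier_matI) auto

lemma pderiv_entries_eqI:
  assumes ab: "a < dim_row Y" "b < dim_col Y"
    and d1: "((\<lambda>u. f (upd_entry Y a b u)) has_vector_derivative d1) (at (Y $$ (a,b)))"
    and d2: "((\<lambda>t. vector_derivative (\<lambda>u. f (upd_entry Y a b u)) (at t))
              has_vector_derivative d2) (at (Y $$ (a,b)))"
  shows "pderiv_entry f Y a b = d1" and "pderiv2_entry f Y a b = d2"
    and "(\<lambda>u. f (upd_entry Y a b u)) differentiable (at (Y $$ (a,b)))"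
    and "(\<lambda>t. pderiv_entry f (upd_entry Y a b t) a b) differentiable (at (Y $$ (a,b)))"
proof -
  have line: "(\<lambda>t. pderiv_entry f (upd_entry Y a b t) a b)
      = (\<lambda>t. vector_derivative (\<lambda>u. f (upd_entry Y a b u)) (at t))"
    using ab by (simp add: pderiv_entry_def upd_entry_index)
  show "pderiv_entry f Y a b = d1"
    unfolding pderiv_entry_def by (rule vector_derivative_at[OF d1])
  show "pderiv2_entry f Y a b = d2"
    unfolding pderiv2_entry_def line by (rule vector_derivative_at[OF d2])
  show "(\<lambda>u. f (upd_entry Y a b u)) differentiable (at (Y $$ (a,b)))"
    using d1 by (rule differentiableI_vector)
  show "(\<lambda>t. pderiv_entry f (upd_entry Y a b t) a b) differentiable (at (Y $$ (a,b)))"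
    unfolding line using d2 by (rule differentiableI_vector)
qed

lemma so_C_carrier: "M \<in> so_C r \<Longrightarrow> M \<in> carrier_mat r r"
  by (simp add: so_C_def)

lemma so_C_skew:
  assumes "M \<in> so_C r" "i < r" "j < r"
  shows "M $$ (i,j) = - M $$ (j,i)"
proof -
  have "M \<in> carrier_mat r r" "transpose_mat M = - M" using assms(1) by (auto simp: so_C_def)
  then have "transpose_mat M $$ (j,i) = (- M) $$ (j,i)" by simp
  then show ?thesis using assms(2,3) \<open>M \<in> carrier_mat r r\<close> by simp
qed

lemma S_mat_carrier: "S_mat r M \<in> carrier_mat (r - 1) r"
  by (simp add: S_mat_def)

definition S_I_plus_M :: "nat \<Rightarrow> complex mat \<Rightarrow> complex mat" where
  "S_I_plus_M r M = S_mat r M * (1\<^sub>m r + M)"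

definition S_I_minus_M :: "nat \<Rightarrow> complex mat \<Rightarrow> complex mat" where
  "S_I_minus_M r M = S_mat r M * (1\<^sub>m r - M)"

lemma S_I_plus_M_index:
  assumes "M \<in> carrier_mat r r" "k < r - 1" "a < r"
  shows "S_I_plus_M r M $$ (k,a) = S_mat r M $$ (k,a) + (\<Sum>c<r. S_mat r M $$ (k,c) * M $$ (c,a))"
proof -
  have "S_I_plus_M r M $$ (k,a) = (\<Sum>c<r. S_mat r M $$ (k,c) * (1\<^sub>m r + M) $$ (c,a))"
    unfolding S_I_plus_M_def by (rule index_mult_mat_sum[OF S_mat_carrier]) (use assms in auto)
  then show ?thesis
    using assms
    by (simp add: distrib_left sum.distrib if_distrib[of "\<lambda>x. _ * x"] sum.delta' cong: if_cong)
qed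

lemma S_I_minus_M_index:
  assumes "M \<in> carrier_mat r r" "k < r - 1" "a < r"
  shows "S_I_minus_M r M $$ (k,a) = S_mat r M $$ (k,a) - (\<Sum>c<r. S_mat r M $$ (k,c) * M $$ (c,a))"
proof -
  have "S_I_minus_M r M $$ (k,a) = (\<Sum>c<r. S_mat r M $$ (k,c) * (1\<^sub>m r - M) $$ (c,a))"
    unfolding S_I_minus_M_def by (rule index_mult_mat_sum[OF S_mat_carrier]) (use assms in auto)
  then show ?thesis
    using assms by (simp add: right_diff_distrib sum_subtractf if_distrib[of "\<lambda>x. _ * x"] sum.delta'
        cong: if_cong)
qed

lemma S_I_minus_M_last_column:
  assumes M: "M \<in> so_C r" and k: "k < r - 1"
  shows "S_I_minus_M r M $$ (k, r - 1) = 0"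
proof -
  have "M $$ (r - 1, r - 1) = - M $$ (r - 1, r - 1)" by (rule so_C_skew[OF M]) (use k in auto)
  then have "M $$ (r - 1, r - 1) = 0" by simp
  then have "(\<Sum>c<r. S_mat r M $$ (k,c) * M $$ (c, r - 1)) = M $$ (k, r - 1)"
    using k by (simp add: S_mat_def if_distrib[of "\<lambda>x. x * _"] sum.If_cases)
  then show ?thesis
    using k so_C_carrier[OF M] by (simp add: S_I_minus_M_index S_mat_def)
qed

lemma sum_S_I_minus_M_row:
  assumes M: "M \<in> so_C r" and k: "k < r - 1"
  shows "(\<Sum>a<r. S_I_minus_M r M $$ (k,a) * g a) = (\<Sum>a<r-1. S_I_minus_M r M $$ (k,a) * g a)"
proof -
  have "{..<r} = insert (r - 1) {..<r - 1}" using k by auto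
  then show ?thesis using S_I_minus_M_last_column[OF M k] by simp
qed

lemma S_I_plus_M_Gram_eq:
  assumes M: "M \<in> so_C r"
  shows "S_I_plus_M r M * transpose_mat (S_I_plus_M r M)
       = S_I_minus_M r M * transpose_mat (S_I_minus_M r M)"
proof -
  have Mc: "M \<in> carrier_mat r r" using M by (rule so_C_carrier)
  let ?S = "S_mat r M" and ?P = "1\<^sub>m r + M" and ?Q = "1\<^sub>m r - M"
  have PQ: "?P \<in> carrier_mat r r" "?Q \<in> carrier_mat r r" using Mc by auto
  have one: "1\<^sub>m r \<in> carrier_mat r r" by simp
  have MT: "transpose_mat M = - M" using M by (simp add: so_C_def)
  have "transpose_mat ?P = ?Q"
    by (simp add: transpose_add[OF one Mc] MT minus_add_uminus_mat[OF one Mc])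
  moreover have "transpose_mat ?Q = ?P"
    using minus_add_uminus_mat[OF one uminus_carrier_mat[OF Mc]] Mc
    by (simp add: transpose_minus[OF one Mc] MT)
  moreover have "?P * ?Q = ?Q * ?P"
  proof -
    have "?P * ?Q = ?Q + (M - M * M)"
      using Mc
      by (simp add: add_mult_distrib_mat[OF one Mc PQ(2)] mult_minus_distrib_mat[OF Mc one Mc])
    also have "\<dots> = ?Q * ?P"
      using Mc
      by (simp add: mult_add_distrib_mat[OF PQ(2) one Mc] minus_mult_distrib_mat[OF one Mc Mc])
    finally show ?thesis .
  qed
  moreover have "?S * A * (B * transpose_mat ?S) = ?S * (A * B) * transpose_mat ?S"
    if "A \<in> carrier_mat r r" "B \<in> carrier_mat r r" for A B
  proof -
    have Sc: "?S \<in> carrier_mat (r - 1) r" and STc: "transpose_mat ?S \<in> carrier_mat r (r - 1)"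
      using S_mat_carrier by auto
    show ?thesis
      using assoc_mult_mat[OF Sc that(1) mult_carrier_mat[OF that(2) STc]]
        assoc_mult_mat[OF that STc] assoc_mult_mat[OF Sc mult_carrier_mat[OF that] STc] by simp
  qed
  ultimately show ?thesis
    using PQ by (simp add: S_I_plus_M_def S_I_minus_M_def transpose_mult[OF S_mat_carrier])
qed

(* The coefficient of the real entry in row 2p + a of X in the numerator S (W + M conj W):
   S (I + M) on the rows of X2 and i S (I - M) on those of X3.  The last row of X3 has
   coefficient zero (S_I_minus_M_last_column) and is left out, so Phi_numer ignores the last row. *)
definition W_coeff :: "nat \<Rightarrow> complex mat \<Rightarrow> nat \<Rightarrow> nat \<Rightarrow> complex" where
  "W_coeff r M k a = (if a < r then S_I_plus_M r M $$ (k,a) else \<i> * S_I_minus_M r M $$ (k, a - r))"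

definition Phi_numer :: "nat \<Rightarrow> nat \<Rightarrow> complex mat \<Rightarrow> real mat \<Rightarrow> complex mat" where
  "Phi_numer p r M X = mat (r - 1) (dim_col X)
     (\<lambda>(k,j). \<Sum>a<2*r-1. W_coeff r M k a * of_real (X $$ (2*p + a, j)))"

lemma sum_W_rows_split:
  fixes f :: "nat \<Rightarrow> 'a::comm_monoid_add"
  assumes "0 < r"
  shows "(\<Sum>a<2*r-1. f a) = (\<Sum>a<r. f a) + (\<Sum>a<r-1. f (r + a))"
  using sum_lessThan_add[of f r "r - 1"] assms by (simp add: mult_2)

lemma W_coeff_orthogonal:
  assumes M: "M \<in> so_C r" and k: "k < r - 1" and k': "k' < r - 1"
  shows "(\<Sum>a<2*r-1. W_coeff r M k a * W_coeff r M k' a) = 0"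
proof -
  have Mc: "M \<in> carrier_mat r r" using M by (rule so_C_carrier)
  have r0: "0 < r" using k by simp
  have ii: "\<i> * x * (\<i> * y) = - (x * y)" for x y :: complex
    by (simp add: algebra_simps)
  have carr: "S_I_plus_M r M \<in> carrier_mat (r - 1) r" "S_I_minus_M r M \<in> carrier_mat (r - 1) r"
    using Mc S_mat_carrier[of r M] by (auto simp: S_I_plus_M_def S_I_minus_M_def)
  have Gram: "(A * transpose_mat A) $$ (k,k') = (\<Sum>a<r. A $$ (k,a) * A $$ (k',a))"
    if "A \<in> carrier_mat (r - 1) r" for A
    using index_mult_mat_sum[OF that _ k k', of "transpose_mat A"] that k' by simp
  have "(\<Sum>a<r. S_I_plus_M r M $$ (k,a) * S_I_plus_M r M $$ (k',a))
      = (\<Sum>a<r-1. S_I_minus_M r M $$ (k,a) * S_I_minus_M r M $$ (k',a))"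
    using S_I_plus_M_Gram_eq[OF M] Gram[OF carr(1)] Gram[OF carr(2)] sum_S_I_minus_M_row[OF M k]
    by simp
  moreover have "(\<Sum>a<2*r-1. W_coeff r M k a * W_coeff r M k' a)
      = (\<Sum>a<r. S_I_plus_M r M $$ (k,a) * S_I_plus_M r M $$ (k',a))
        - (\<Sum>a<r-1. S_I_minus_M r M $$ (k,a) * S_I_minus_M r M $$ (k',a))"
    unfolding sum_W_rows_split[OF r0] using k by (simp add: W_coeff_def sum_negf[symmetric] ii)
  ultimately show ?thesis by simp
qed

lemma S_mult_W_plus_M_conj_W:
  fixes p r :: nat and M :: "complex mat" and X :: "real mat"
  defines "W \<equiv> cmat (row_block X (2*p) r) + \<i> \<cdot>\<^sub>m cmat (row_block X (2*p + r) r)"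
  assumes M: "M \<in> so_C r"
  shows "S_mat r M * (W + M * cconj_mat W) = Phi_numer p r M X"
proof -
  have Mc: "M \<in> carrier_mat r r" using M by (rule so_C_carrier)
  have Wc: "W \<in> carrier_mat r (dim_col X)" by (simp add: W_def cmat_def row_block_def)
  then have Wc': "cconj_mat W \<in> carrier_mat r (dim_col X)" by (simp add: cconj_mat_def)
  have Sc: "S_mat r M \<in> carrier_mat (r - 1) r" by (rule S_mat_carrier)
  show ?thesis
  proof (rule eq_matI)
    fix k j assume "k < dim_row (Phi_numer p r M X)" "j < dim_col (Phi_numer p r M X)"
    then have k: "k < r - 1" and j: "j < dim_col X" by (auto simp: Phi_numer_def)
    let ?s = "\<lambda>c. S_mat r M $$ (k,c)" and ?w = "\<lambda>a. W $$ (a,j)"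
    let ?x = "\<lambda>a. of_real (X $$ (2*p + a, j)) :: complex"
    let ?y = "\<lambda>a. of_real (X $$ (2*p + r + a, j)) :: complex"
    have w: "?w a = ?x a + \<i> * ?y a" if "a < r" for a
      using that j by (simp add: W_def cmat_def row_block_def)
    have MW: "(M * cconj_mat W) $$ (c,j) = (\<Sum>a<r. M $$ (c,a) * cnj (?w a))" if "c < r" for c
    proof -
      have "(M * cconj_mat W) $$ (c,j) = (\<Sum>a<r. M $$ (c,a) * cconj_mat W $$ (a,j))"
        by (rule index_mult_mat_sum[OF Mc]) (use Wc that j in \<open>auto simp: cconj_mat_def\<close>)
      then show ?thesis using Wc j by (simp add: cconj_mat_def)
    qed
    have WMW: "(W + M * cconj_mat W) $$ (c,j) = ?w c + (\<Sum>a<r. M $$ (c,a) * cnj (?w a))"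
      if "c < r" for c
      by (subst index_add_mat) (use that Wc' Mc j MW[OF that] in \<open>auto simp del: index_mult_mat(1)\<close>)
    have "(S_mat r M * (W + M * cconj_mat W)) $$ (k,j)
        = (\<Sum>c<r. ?s c * (W + M * cconj_mat W) $$ (c,j))"
      by (rule index_mult_mat_sum[OF Sc _ k j]) (use Wc Wc' Mc in auto)
    also have "\<dots> = (\<Sum>c<r. ?s c * (?w c + (\<Sum>a<r. M $$ (c,a) * cnj (?w a))))"
      by (intro sum.cong refl) (simp add: WMW)
    also have "\<dots> = (\<Sum>c<r. ?s c * ?w c) + (\<Sum>c<r. \<Sum>a<r. ?s c * M $$ (c,a) * cnj (?w a))"
      by (simp add: distrib_left sum.distrib sum_distrib_left mult.assoc)
    also have "(\<Sum>c<r. \<Sum>a<r. ?s c * M $$ (c,a) * cnj (?w a))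
        = (\<Sum>a<r. (\<Sum>c<r. ?s c * M $$ (c,a)) * cnj (?w a))"
      by (subst sum.swap) (simp add: sum_distrib_right)
    also have "(\<Sum>c<r. ?s c * ?w c) + (\<Sum>a<r. (\<Sum>c<r. ?s c * M $$ (c,a)) * cnj (?w a))
        = (\<Sum>a<r. ?s a * ?w a + (\<Sum>c<r. ?s c * M $$ (c,a)) * cnj (?w a))"
      by (simp add: sum.distrib)
    also have "\<dots> = (\<Sum>a<r. (?s a + (\<Sum>c<r. ?s c * M $$ (c,a))) * ?x a
        + \<i> * ((?s a - (\<Sum>c<r. ?s c * M $$ (c,a))) * ?y a))"
      by (intro sum.cong refl) (simp add: w algebra_simps)
    also have "\<dots> = (\<Sum>a<r. S_I_plus_M r M $$ (k,a) * ?x a + \<i> * (S_I_minus_M r M $$ (k,a) * ?y a))"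
      by (intro sum.cong refl) (simp add: S_I_plus_M_index[OF Mc k] S_I_minus_M_index[OF Mc k])
    also have "\<dots> = (\<Sum>a<r. S_I_plus_M r M $$ (k,a) * ?x a)
        + \<i> * (\<Sum>a<r. S_I_minus_M r M $$ (k,a) * ?y a)"
      by (simp add: sum.distrib sum_distrib_left)
    also have "(\<Sum>a<r. S_I_minus_M r M $$ (k,a) * ?y a) = (\<Sum>a<r-1. S_I_minus_M r M $$ (k,a) * ?y a)"
      by (rule sum_S_I_minus_M_row[OF M k])
    also have "(\<Sum>a<r. S_I_plus_M r M $$ (k,a) * ?x a)
        + \<i> * (\<Sum>a<r-1. S_I_minus_M r M $$ (k,a) * ?y a) = (\<Sum>a<2*r-1. W_coeff r M k a * ?x a)"
      using k
      by (subst sum_W_rows_split) (simp_all add: W_coeff_def sum_distrib_left mult.assoc add.assoc)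
    also have "\<dots> = Phi_numer p r M X $$ (k,j)"
      using k j by (simp add: Phi_numer_def)
    finally show "(S_mat r M * (W + M * cconj_mat W)) $$ (k,j) = Phi_numer p r M X $$ (k,j)" .
  qed (use Sc Wc Wc' in \<open>auto simp: Phi_numer_def\<close>)
qed

lemma Phi_hat_eq_Phi_numer_mult:
  assumes "M \<in> so_C r"
  shows "Phi_hat p r M X = Phi_numer p r M X * the (mat_inverse (Zmat p X))"
  using S_mult_W_plus_M_conj_W[OF assms, where p=p and X=X] by (simp add: Phi_hat_def Let_def)

lemma row_block_0_eqD:
  assumes "row_block X 0 n = row_block X' 0 n"
  shows "dim_col X' = dim_col X" and "\<And>i j. i < n \<Longrightarrow> j < dim_col X \<Longrightarrow> X' $$ (i,j) = X $$ (i,j)"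
proof -
  show dim: "dim_col X' = dim_col X"
    using arg_cong[OF assms, of dim_col] by (simp add: row_block_def)
  fix i j assume "i < n" "j < dim_col X"
  then show "X' $$ (i,j) = X $$ (i,j)"
    using arg_cong[OF assms, of "\<lambda>A. A $$ (i,j)"] dim by (simp add: row_block_def)
qed

lemma Zmat_carrier: "Zmat p Y \<in> carrier_mat p (dim_col Y)"
  by (simp add: Zmat_def cmat_def row_block_def)

lemma Zmat_index:
  "i < p \<Longrightarrow> j < dim_col Y \<Longrightarrow> Zmat p Y $$ (i,j) = of_real (Y $$ (i,j)) + \<i> * of_real (Y $$ (p + i, j))"
  by (simp add: Zmat_def cmat_def row_block_def)

lemma Zmat_cong:
  assumes "row_block X 0 n = row_block X' 0 n" "2*p \<le> n"
  shows "Zmat p X = Zmat p X'"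
  using row_block_0_eqD[OF assms(1)] assms(2)
  by (intro eq_matI) (auto simp: Zmat_def cmat_def row_block_def)

lemma Phi_numer_cong:
  assumes "row_block X 0 n = row_block X' 0 n" "2*p + (2*r-1) \<le> n"
  shows "Phi_numer p r M X = Phi_numer p r M X'"
  using row_block_0_eqD[OF assms(1)] assms(2)
  by (intro eq_matI) (auto simp: Phi_numer_def intro!: sum.cong)

lemma Phi_hat_cong:
  assumes "M \<in> so_C r" "0 < r"
    and "row_block X 0 n = row_block X' 0 n" "2*p + 2*r - 1 \<le> n"
  shows "Phi_hat p r M X = Phi_hat p r M X'"
  using Zmat_cong[OF assms(3)] Phi_numer_cong[OF assms(3)] assms(2,4)
  by (simp add: Phi_hat_eq_Phi_numer_mult[OF assms(1)])

lemma Phi_hat_eq_if_delete_last_row_eq: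
  assumes "M \<in> so_C r" "0 < r" "dim_row X = 2*p + 2*r" "dim_row X' = 2*p + 2*r"
    and "delete_last_row X = delete_last_row X'"
  shows "Phi_hat p r M X = Phi_hat p r M X'"
  by (rule Phi_hat_cong[OF assms(1,2), of _ "2*p + 2*r - 1"])
    (use assms(3-5) in \<open>simp_all add: delete_last_row_def row_block_def\<close>)

lemma Phi_star_delete_last_row:
  assumes "M \<in> so_C r" "0 < r" "dim_row X = 2*p + 2*r"
  shows "Phi_star p r M (delete_last_row X) = Phi_hat p r M X"
  unfolding Phi_star_def
  by (rule Phi_hat_cong[OF assms(1,2), of _ "2*p + 2*r - 1"])
    (use assms(3) in
      \<open>auto intro!: eq_matI simp: delete_last_row_def append_zero_row_def row_block_def\<close>)

lemma Phi_star_eq_Phi_numer_mult: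
  assumes "M \<in> so_C r" "0 < r" "2*p + 2*r - 1 \<le> dim_row Y"
  shows "Phi_star p r M Y = Phi_numer p r M Y * the (mat_inverse (Zmat p Y))"
proof -
  have Y: "row_block (append_zero_row Y) 0 (dim_row Y) = row_block Y 0 (dim_row Y)"
    by (rule eq_matI) (auto simp: append_zero_row_def row_block_def)
  show ?thesis
    using Zmat_cong[OF Y] Phi_numer_cong[OF Y] assms(2,3)
    by (simp add: Phi_star_def Phi_hat_eq_Phi_numer_mult[OF assms(1)])
qed

lemma Phi_star_index:
  assumes M: "M \<in> so_C r" and r: "0 < r" and Y: "Y \<in> carrier_mat (2*p + 2*r - 1) p"
    and N: "mat_inverse (Zmat p Y) = Some N" and k: "k < r - 1" and l: "l < p"
  shows "Phi_star p r M Y $$ (k,l) = (\<Sum>j<p. Phi_numer p r M Y $$ (k,j) * N $$ (j,l))"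
proof -
  have "Zmat p Y \<in> carrier_mat p p" using Zmat_carrier[of p Y] Y by simp
  then have "N \<in> carrier_mat p p" using mat_inverse(2)[OF _ N] by auto
  moreover have "Phi_numer p r M Y \<in> carrier_mat (r - 1) p"
    using Y by (simp add: Phi_numer_def)
  ultimately show ?thesis
    using Phi_star_eq_Phi_numer_mult[OF M r] Y N index_mult_mat_sum[OF _ _ k l] by simp
qed

lemma Zmat_upd_entry_Z:
  assumes a: "a < 2*p" and Y: "2*p \<le> dim_row Y" and i: "i < p" and j: "j < dim_col Y"
  shows "Zmat p (upd_entry Y a b u) $$ (i,j) = Zmat p Y $$ (i,j)
    + (if i = a mod p \<and> j = b then (if a < p then 1 else \<i>) * of_real (u - Y $$ (a,b)) else 0)"
proof -
  have "i < dim_row Y" "p + i < dim_row Y" using i Y by auto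
  then show ?thesis
    using a i j by (auto simp: Zmat_index upd_entry_index le_mod_geq algebra_simps)
qed

lemma Zmat_upd_entry_W:
  "2*p \<le> a \<Longrightarrow> 2*p \<le> dim_row Y \<Longrightarrow> Zmat p (upd_entry Y a b u) = Zmat p Y"
  by (rule eq_matI) (auto simp: Zmat_def cmat_def row_block_def upd_entry_index)

lemma Phi_numer_upd_entry_Z:
  "a < 2*p \<Longrightarrow> 2*p + 2*r - 1 \<le> dim_row Y \<Longrightarrow> Phi_numer p r M (upd_entry Y a b u) = Phi_numer p r M Y"
  by (rule eq_matI) (auto simp: Phi_numer_def upd_entry_index intro!: sum.cong)

lemma Phi_numer_upd_entry_W:
  assumes a: "a < 2*r - 1" and Y: "2*p + 2*r - 1 \<le> dim_row Y"
    and k: "k < r - 1" and j: "j < dim_col Y"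
  shows "Phi_numer p r M (upd_entry Y (2*p + a) b u) $$ (k,j) = Phi_numer p r M Y $$ (k,j)
    + (if j = b then W_coeff r M k a * of_real (u - Y $$ (2*p + a, b)) else 0)"
proof -
  have "(\<Sum>c<2*r-1. W_coeff r M k c * of_real (upd_entry Y (2*p + a) b u $$ (2*p + c, j)))
      = (\<Sum>c<2*r-1. W_coeff r M k c * of_real (Y $$ (2*p + c, j))
          + (if c = a \<and> j = b then W_coeff r M k a * of_real (u - Y $$ (2*p + a, b)) else 0))"
    using Y j by (intro sum.cong refl) (auto simp: upd_entry_index algebra_simps)
  then show ?thesis
    using a k j by (simp add: Phi_numer_def sum.distrib)
qed

lemma Phi_star_upd_entry_Z:
  fixes u :: real
  assumes M: "M \<in> so_C r" and r: "0 < r" and Y: "Y \<in> carrier_mat (2*p + 2*r - 1) p"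
    and N: "mat_inverse (Zmat p Y) = Some N" and a: "a < 2*p" and b: "b < p"
    and k: "k < r - 1" and l: "l < p"
  defines "\<sigma> \<equiv> (if a < p then 1 else \<i>) * of_real (u - Y $$ (a,b))"
  assumes d: "1 + \<sigma> * N $$ (b, a mod p) \<noteq> 0"
  shows "Phi_star p r M (upd_entry Y a b u) $$ (k,l) = Phi_star p r M Y $$ (k,l)
    - \<sigma> * Phi_star p r M Y $$ (k, a mod p) * N $$ (b,l) / (1 + \<sigma> * N $$ (b, a mod p))"
proof -
  let ?\<alpha> = "a mod p" and ?Y' = "upd_entry Y a b u" and ?d = "1 + \<sigma> * N $$ (b, a mod p)"
  have \<alpha>: "?\<alpha> < p" using b by simp
  have Y': "?Y' \<in> carrier_mat (2*p + 2*r - 1) p" using Y by (rule upd_entry_carrier)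
  have Zc: "Zmat p Y \<in> carrier_mat p p" and Zc': "Zmat p ?Y' \<in> carrier_mat p p"
    using Zmat_carrier[of p Y] Zmat_carrier[of p ?Y'] Y by auto
  have N': "mat_inverse (Zmat p ?Y')
      = Some (mat p p (\<lambda>(j,l). N $$ (j,l) - \<sigma> * N $$ (j,?\<alpha>) * N $$ (b,l) / ?d))"
    by (rule mat_inverse_rank_one_update[OF Zc N Zc' _ \<alpha> b d])
      (unfold \<sigma>_def, rule Zmat_upd_entry_Z[OF a], use Y r in auto)
  have "Phi_star p r M ?Y' $$ (k,l)
      = (\<Sum>j<p. Phi_numer p r M Y $$ (k,j) * (N $$ (j,l) - \<sigma> * N $$ (j,?\<alpha>) * N $$ (b,l) / ?d))"
    using Phi_star_index[OF M r Y' N' k l] Phi_numer_upd_entry_Z[OF a] Y l by simp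
  also have "\<dots> = (\<Sum>j<p. Phi_numer p r M Y $$ (k,j) * N $$ (j,l)
      - \<sigma> * N $$ (b,l) / ?d * (Phi_numer p r M Y $$ (k,j) * N $$ (j,?\<alpha>)))"
    by (intro sum.cong refl) (simp add: right_diff_distrib)
  also have "\<dots> = Phi_star p r M Y $$ (k,l) - \<sigma> * N $$ (b,l) / ?d * Phi_star p r M Y $$ (k,?\<alpha>)"
    using Phi_star_index[OF M r Y N k] l \<alpha> by (simp add: sum_subtractf sum_distrib_left)
  finally show ?thesis by simp
qed

lemma Phi_star_upd_entry_W:
  assumes M: "M \<in> so_C r" and r: "0 < r" and Y: "Y \<in> carrier_mat (2*p + 2*r - 1) p"
    and N: "mat_inverse (Zmat p Y) = Some N" and a: "a < 2*r - 1" and b: "b < p"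
    and k: "k < r - 1" and l: "l < p"
  shows "Phi_star p r M (upd_entry Y (2*p + a) b u) $$ (k,l)
    = Phi_star p r M Y $$ (k,l) + of_real (u - Y $$ (2*p + a, b)) * (W_coeff r M k a * N $$ (b,l))"
proof -
  let ?Y' = "upd_entry Y (2*p + a) b u"
  have Y': "?Y' \<in> carrier_mat (2*p + 2*r - 1) p" using Y by (rule upd_entry_carrier)
  have N': "mat_inverse (Zmat p ?Y') = Some N"
    using Zmat_upd_entry_W[of p "2*p + a" Y] Y N r by simp
  have "Phi_star p r M ?Y' $$ (k,l) = (\<Sum>j<p. Phi_numer p r M Y $$ (k,j) * N $$ (j,l)
      + (if j = b then W_coeff r M k a * of_real (u - Y $$ (2*p + a, b)) * N $$ (b,l) else 0))"
    using Phi_star_index[OF M r Y' N' k l] Phi_numer_upd_entry_W[OF a _ k] Y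
    by (simp add: distrib_right if_distrib[of "\<lambda>x. x * _"] cong: if_cong)
  also have "\<dots> = Phi_star p r M Y $$ (k,l)
      + of_real (u - Y $$ (2*p + a, b)) * (W_coeff r M k a * N $$ (b,l))"
    using Phi_star_index[OF M r Y N k l] b by (simp add: sum.distrib)
  finally show ?thesis .
qed

lemma pderiv_Phi_star_Z:
  assumes M: "M \<in> so_C r" and r: "0 < r" and Y: "Y \<in> carrier_mat (2*p + 2*r - 1) p"
    and N: "mat_inverse (Zmat p Y) = Some N" and a: "a < 2*p" and b: "b < p"
    and k: "k < r - 1" and l: "l < p"
  defines "\<phi> \<equiv> \<lambda>Y. Phi_star p r M Y $$ (k,l)" and "c \<equiv> if a < p then 1 else \<i>"
    and "R \<equiv> Phi_star p r M Y $$ (k, a mod p) * N $$ (b,l)"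
  shows "pderiv_entry \<phi> Y a b = - c * R"
    and "pderiv2_entry \<phi> Y a b = 2 * c\<^sup>2 * R * N $$ (b, a mod p)"
    and "(\<lambda>u. \<phi> (upd_entry Y a b u)) differentiable (at (Y $$ (a,b)))"
    and "(\<lambda>t. pderiv_entry \<phi> (upd_entry Y a b t) a b) differentiable (at (Y $$ (a,b)))"
proof -
  have ab: "a < dim_row Y" "b < dim_col Y" using Y a b r by auto
  have "\<phi> (upd_entry Y a b u) = \<phi> Y - c * of_real (u - Y $$ (a,b)) * R
      / (1 + c * of_real (u - Y $$ (a,b)) * N $$ (b, a mod p))"
    if "1 + c * of_real (u - Y $$ (a,b)) * N $$ (b, a mod p) \<noteq> 0" for u
    using Phi_star_upd_entry_Z[OF M r Y N a b k l that[unfolded c_def]]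
    by (simp add: \<phi>_def c_def R_def mult.assoc)
  note line = moebius_line_vector_derivatives[where f="\<lambda>u. \<phi> (upd_entry Y a b u)", OF this]
  from pderiv_entries_eqI[OF ab line]
  show "pderiv_entry \<phi> Y a b = - c * R"
    and "pderiv2_entry \<phi> Y a b = 2 * c\<^sup>2 * R * N $$ (b, a mod p)"
    and "(\<lambda>u. \<phi> (upd_entry Y a b u)) differentiable (at (Y $$ (a,b)))"
    and "(\<lambda>t. pderiv_entry \<phi> (upd_entry Y a b t) a b) differentiable (at (Y $$ (a,b)))"
    by auto
qed

lemma pderiv_Phi_star_W:
  assumes M: "M \<in> so_C r" and r: "0 < r" and Y: "Y \<in> carrier_mat (2*p + 2*r - 1) p"
    and N: "mat_inverse (Zmat p Y) = Some N" and a: "a < 2*r - 1" and b: "b < p"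
    and k: "k < r - 1" and l: "l < p"
  defines "\<phi> \<equiv> \<lambda>Y. Phi_star p r M Y $$ (k,l)"
  shows "pderiv_entry \<phi> Y (2*p + a) b = W_coeff r M k a * N $$ (b,l)"
    and "pderiv2_entry \<phi> Y (2*p + a) b = 0"
    and "(\<lambda>u. \<phi> (upd_entry Y (2*p + a) b u)) differentiable (at (Y $$ (2*p + a, b)))"
    and "(\<lambda>t. pderiv_entry \<phi> (upd_entry Y (2*p + a) b t) (2*p + a) b)
          differentiable (at (Y $$ (2*p + a, b)))"
proof -
  have ab: "2*p + a < dim_row Y" "b < dim_col Y" using Y a b by auto
  have "\<phi> (upd_entry Y (2*p + a) b u)
      = \<phi> Y + of_real (u - Y $$ (2*p + a, b)) * (W_coeff r M k a * N $$ (b,l))" for u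
    using Phi_star_upd_entry_W[OF M r Y N a b k l] by (simp add: \<phi>_def)
  note line = affine_line_vector_derivatives[where f="\<lambda>u. \<phi> (upd_entry Y (2*p + a) b u)", OF this]
  from pderiv_entries_eqI[OF ab line]
  show "pderiv_entry \<phi> Y (2*p + a) b = W_coeff r M k a * N $$ (b,l)"
    and "pderiv2_entry \<phi> Y (2*p + a) b = 0"
    and "(\<lambda>u. \<phi> (upd_entry Y (2*p + a) b u)) differentiable (at (Y $$ (2*p + a, b)))"
    and "(\<lambda>t. pderiv_entry \<phi> (upd_entry Y (2*p + a) b t) (2*p + a) b)
          differentiable (at (Y $$ (2*p + a, b)))"
    by auto
qed

lemma Phi_star_coordinate_lines_differentiable:
  assumes M: "M \<in> so_C r" and r: "0 < r" and Y: "Y \<in> carrier_mat (2*p + 2*r - 1) p"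
    and det: "det (Zmat p Y) \<noteq> 0" and a: "a < 2*p + 2*r - 1" and b: "b < p"
    and k: "k < r - 1" and l: "l < p"
  defines "\<phi> \<equiv> \<lambda>Y. Phi_star p r M Y $$ (k,l)"
  shows "(\<lambda>u. \<phi> (upd_entry Y a b u)) differentiable (at (Y $$ (a,b)))"
    and "(\<lambda>t. pderiv_entry \<phi> (upd_entry Y a b t) a b) differentiable (at (Y $$ (a,b)))"
proof -
  obtain N where N: "mat_inverse (Zmat p Y) = Some N"
    using mat_inverse_exists[OF _ det] Zmat_carrier[of p Y] Y by auto
  have "(\<lambda>u. \<phi> (upd_entry Y a b u)) differentiable (at (Y $$ (a,b)))
    \<and> (\<lambda>t. pderiv_entry \<phi> (upd_entry Y a b t) a b) differentiable (at (Y $$ (a,b)))"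
  proof (cases "a < 2*p")
    case True
    then show ?thesis using pderiv_Phi_star_Z(3,4)[OF M r Y N True b k l] by (simp add: \<phi>_def)
  next
    case False
    define a' where "a' = a - 2*p"
    have a': "a = 2*p + a'" "a' < 2*r - 1" using False a by (simp_all add: a'_def)
    show ?thesis
      using pderiv_Phi_star_W(3,4)[OF M r Y N a'(2) b k l] by (simp add: \<phi>_def a'(1))
  qed
  then show "(\<lambda>u. \<phi> (upd_entry Y a b u)) differentiable (at (Y $$ (a,b)))"
    and "(\<lambda>t. pderiv_entry \<phi> (upd_entry Y a b t) a b) differentiable (at (Y $$ (a,b)))"
    by auto
qed

lemma twice_coord_diff_on_Phi_star:
  assumes M: "M \<in> so_C r" and r: "0 < r" and k: "k < r - 1" and l: "l < p"
    and D: "\<And>Y. Y \<in> D \<Longrightarrow> Y \<in> carrier_mat (2*p + 2*r - 1) p \<and> det (Zmat p Y) \<noteq> 0"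
  shows "twice_coord_diff_on D (\<lambda>Y. Phi_star p r M Y $$ (k,l))"
  unfolding twice_coord_diff_on_def
proof (intro ballI allI impI conjI)
  fix X a b assume X: "X \<in> D" and a: "a < dim_row X" and b: "b < dim_col X"
  have a': "a < 2*p + 2*r - 1" and b': "b < p" using a b D[OF X] by auto
  show "(\<lambda>t. pderiv_entry (\<lambda>Y. Phi_star p r M Y $$ (k,l)) (upd_entry X a b t) a b)
      differentiable (at (X $$ (a,b)))"
    using D[OF X] Phi_star_coordinate_lines_differentiable(2)[OF M r _ _ a' b' k l] by blast
  fix t assume "upd_entry X a b t \<in> D"
  then have "(\<lambda>u. Phi_star p r M (upd_entry (upd_entry X a b t) a b u) $$ (k,l))
      differentiable (at (upd_entry X a b t $$ (a,b)))"
    using D Phi_star_coordinate_lines_differentiable(1)[OF M r _ _ a' b' k l] by blast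
  then show "(\<lambda>u. Phi_star p r M (upd_entry X a b u) $$ (k,l)) differentiable (at t)"
    using a b by (simp add: upd_entry_index)
qed

lemma sum_Z_W_rows:
  fixes f :: "nat \<Rightarrow> 'a::comm_monoid_add"
  assumes "0 < r"
  shows "(\<Sum>a<2*p + 2*r - 1. f a) = (\<Sum>a<p. f a + f (p + a)) + (\<Sum>a<2*r - 1. f (2*p + a))"
proof -
  have n: "2*p + 2*r - 1 = p + (p + (2*r - 1))" using assms by simp
  show ?thesis
    unfolding n sum_lessThan_add by (simp add: sum.distrib add.assoc mult_2)
qed

lemma tau_eucl_Phi_star:
  assumes M: "M \<in> so_C r" and r: "0 < r" and Y: "Y \<in> carrier_mat (2*p + 2*r - 1) p"
    and det: "det (Zmat p Y) \<noteq> 0" and k: "k < r - 1" and l: "l < p"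
  shows "tau_eucl (\<lambda>Y. Phi_star p r M Y $$ (k,l)) Y = 0"
proof -
  obtain N where N: "mat_inverse (Zmat p Y) = Some N"
    using mat_inverse_exists[OF _ det] Zmat_carrier[of p Y] Y by auto
  define h where "h a = (\<Sum>b<p. pderiv2_entry (\<lambda>Y. Phi_star p r M Y $$ (k,l)) Y a b)" for a
  have Z: "h a + h (p + a) = 0" if a: "a < p" for a
  proof -
    have "p + a < 2*p" "(p + a) mod p = a" using a by auto
    then show ?thesis
      using pderiv_Phi_star_Z(2)[OF M r Y N _ _ k l] a
      by (simp add: h_def sum.distrib[symmetric] power2_eq_square)
  qed
  have W: "h (2*p + a) = 0" if "a < 2*r - 1" for a
    using pderiv_Phi_star_W(2)[OF M r Y N that _ k l] by (simp add: h_def)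
  have "tau_eucl (\<lambda>Y. Phi_star p r M Y $$ (k,l)) Y = (\<Sum>a<2*p + 2*r - 1. h a)"
    using Y by (simp add: tau_eucl_def h_def)
  also have "\<dots> = (\<Sum>a<p. h a + h (p + a)) + (\<Sum>a<2*r - 1. h (2*p + a))"
    by (rule sum_Z_W_rows[OF r])
  also have "\<dots> = 0" using Z W by simp
  finally show ?thesis .
qed

lemma kappa_eucl_Phi_star:
  assumes M: "M \<in> so_C r" and r: "0 < r" and Y: "Y \<in> carrier_mat (2*p + 2*r - 1) p"
    and det: "det (Zmat p Y) \<noteq> 0" and k: "k < r - 1" and l: "l < p"
    and k': "k' < r - 1" and l': "l' < p"
  shows "kappa_eucl (\<lambda>Y. Phi_star p r M Y $$ (k,l)) (\<lambda>Y. Phi_star p r M Y $$ (k',l')) Y = 0"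
proof -
  obtain N where N: "mat_inverse (Zmat p Y) = Some N"
    using mat_inverse_exists[OF _ det] Zmat_carrier[of p Y] Y by auto
  define h where "h a = (\<Sum>b<p. pderiv_entry (\<lambda>Y. Phi_star p r M Y $$ (k,l)) Y a b
      * pderiv_entry (\<lambda>Y. Phi_star p r M Y $$ (k',l')) Y a b)" for a
  have Z: "h a + h (p + a) = 0" if a: "a < p" for a
  proof -
    have "p + a < 2*p" "(p + a) mod p = a" using a by auto
    then show ?thesis
      using pderiv_Phi_star_Z(1)[OF M r Y N _ _ k l] pderiv_Phi_star_Z(1)[OF M r Y N _ _ k' l'] a
      by (simp add: h_def sum.distrib[symmetric] algebra_simps)
  qed
  have W: "h (2*p + a) = W_coeff r M k a * W_coeff r M k' a * (\<Sum>b<p. N $$ (b,l) * N $$ (b,l'))"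
    if "a < 2*r - 1" for a
    using pderiv_Phi_star_W(1)[OF M r Y N that _ k l] pderiv_Phi_star_W(1)[OF M r Y N that _ k' l']
    by (simp add: h_def sum_distrib_left algebra_simps)
  have "kappa_eucl (\<lambda>Y. Phi_star p r M Y $$ (k,l)) (\<lambda>Y. Phi_star p r M Y $$ (k',l')) Y
      = (\<Sum>a<2*p + 2*r - 1. h a)"
    using Y by (simp add: kappa_eucl_def h_def)
  also have "\<dots> = (\<Sum>a<p. h a + h (p + a)) + (\<Sum>a<2*r - 1. h (2*p + a))"
    by (rule sum_Z_W_rows[OF r])
  also have "\<dots> = (\<Sum>a<2*r - 1. W_coeff r M k a * W_coeff r M k' a)
      * (\<Sum>b<p. N $$ (b,l) * N $$ (b,l'))"
    using Z W by (simp add: sum_distrib_right)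
  also have "\<dots> = 0" using W_coeff_orthogonal[OF M k k'] by simp
  finally show ?thesis .
qed

lemma cmat_mult: "A \<in> carrier_mat m n \<Longrightarrow> B \<in> carrier_mat n q \<Longrightarrow> cmat (A * B) = cmat A * cmat B"
  by (rule eq_matI) (auto simp: cmat_def scalar_prod_def)

lemma cmat_one: "cmat (1\<^sub>m n) = 1\<^sub>m n"
  by (rule eq_matI) (auto simp: cmat_def)

lemma Zmat_mult:
  assumes Y: "Y \<in> carrier_mat m q" and g: "g \<in> carrier_mat q q'" and m: "2*p \<le> m"
  shows "Zmat p (Y * g) = Zmat p Y * cmat g"
proof (rule eq_matI)
  fix i j assume "i < dim_row (Zmat p Y * cmat g)" "j < dim_col (Zmat p Y * cmat g)"
  then have i: "i < p" and j: "j < q'" using g Zmat_carrier[of p Y] by (auto simp: cmat_def)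
  have Yg: "complex_of_real ((Y * g) $$ (x,j))
      = (\<Sum>c<q. of_real (Y $$ (x,c)) * of_real (g $$ (c,j)))"
    if "x < m" for x
    using index_mult_mat_sum[OF Y g that j] by simp
  have "Zmat p (Y * g) $$ (i,j) = (\<Sum>c<q. (of_real (Y $$ (i,c)) + \<i> * of_real (Y $$ (p + i, c)))
      * of_real (g $$ (c,j)))"
    using i j g m Yg[of i] Yg[of "p + i"]
    by (simp add: Zmat_index sum.distrib sum_distrib_left distrib_right mult.assoc)
  also have "\<dots> = (Zmat p Y * cmat g) $$ (i,j)"
    using i j Y g Zmat_carrier[of p Y]
    by (subst index_mult_mat_sum[of _ p q _ q']) (auto simp: Zmat_index cmat_def)
  finally show "Zmat p (Y * g) $$ (i,j) = (Zmat p Y * cmat g) $$ (i,j)" .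
qed (use g Zmat_carrier[of p Y] Zmat_carrier[of p "Y * g"] in \<open>auto simp: cmat_def\<close>)

lemma Phi_numer_mult:
  assumes Y: "Y \<in> carrier_mat m q" and g: "g \<in> carrier_mat q q'" and m: "2*p + 2*r - 1 \<le> m"
  shows "Phi_numer p r M (Y * g) = Phi_numer p r M Y * cmat g"
proof (rule eq_matI)
  fix k j
  assume "k < dim_row (Phi_numer p r M Y * cmat g)" "j < dim_col (Phi_numer p r M Y * cmat g)"
  then have k: "k < r - 1" and j: "j < q'" using g by (auto simp: Phi_numer_def cmat_def)
  have Yg: "complex_of_real ((Y * g) $$ (2*p + a, j))
      = (\<Sum>c<q. of_real (Y $$ (2*p + a, c)) * of_real (g $$ (c,j)))" if "a < 2*r - 1" for a
    using index_mult_mat_sum[OF Y g _ j, of "2*p + a"] that m by simp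
  have "Phi_numer p r M (Y * g) $$ (k,j)
      = (\<Sum>a<2*r-1. W_coeff r M k a * of_real ((Y * g) $$ (2*p + a, j)))"
    using k j g by (simp add: Phi_numer_def)
  also have "\<dots> = (\<Sum>a<2*r-1. \<Sum>c<q.
      W_coeff r M k a * of_real (Y $$ (2*p + a, c)) * of_real (g $$ (c,j)))"
    by (intro sum.cong refl) (simp add: Yg sum_distrib_left mult.assoc)
  also have "\<dots> = (\<Sum>c<q. \<Sum>a<2*r-1.
      W_coeff r M k a * of_real (Y $$ (2*p + a, c)) * of_real (g $$ (c,j)))"
    by (rule sum.swap)
  also have "\<dots> = (\<Sum>c<q. Phi_numer p r M Y $$ (k,c) * cmat g $$ (c,j))"
    by (intro sum.cong refl) (use k j g Y in \<open>simp add: Phi_numer_def cmat_def sum_distrib_right\<close>)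
  also have "\<dots> = (Phi_numer p r M Y * cmat g) $$ (k,j)"
    using k j Y g by (intro index_mult_mat_sum[symmetric]) (auto simp: Phi_numer_def cmat_def)
  finally show "Phi_numer p r M (Y * g) $$ (k,j) = (Phi_numer p r M Y * cmat g) $$ (k,j)" .
qed (use g in \<open>auto simp: Phi_numer_def cmat_def\<close>)

lemma Phi_star_mult_invertible:
  assumes M: "M \<in> so_C r" and r: "0 < r" and Y: "Y \<in> carrier_mat (2*p + 2*r - 1) p"
    and det: "det (Zmat p Y) \<noteq> 0" and g: "g \<in> carrier_mat p p" "invertible_mat g"
  shows "Phi_star p r M (Y * g) = Phi_star p r M Y"
proof -
  obtain g' where gg': "g * g' = 1\<^sub>m p" and g': "g' \<in> carrier_mat p p"
    using g unfolding invertible_mat_def inverts_mat_def square_mat.simps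
    by (metis carrier_matD carrier_matI index_mult_mat(3) index_one_mat(3))
  have Zc: "Zmat p Y \<in> carrier_mat p p" using Zmat_carrier[of p Y] Y by simp
  obtain N where N: "mat_inverse (Zmat p Y) = Some N" using mat_inverse_exists[OF Zc det] .
  have Nc: "N \<in> carrier_mat p p" and ZN: "Zmat p Y * N = 1\<^sub>m p"
    using mat_inverse(2)[OF Zc N] by auto
  let ?G = "cmat g" and ?G' = "cmat g'"
  have G: "?G \<in> carrier_mat p p" "?G' \<in> carrier_mat p p" using g g' by (auto simp: cmat_def)
  have GG': "?G * ?G' = 1\<^sub>m p" using cmat_mult[OF g(1) g'] gg' cmat_one by simp
  have G'N: "?G * (?G' * N) = N" using G Nc GG' by (simp flip: assoc_mult_mat[OF G Nc])
  have ZYg: "Zmat p (Y * g) = Zmat p Y * ?G" using Zmat_mult[OF Y g(1)] r by simp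
  have "Zmat p (Y * g) * (?G' * N) = Zmat p Y * (?G * (?G' * N))"
    unfolding ZYg by (rule assoc_mult_mat[OF Zc G(1) mult_carrier_mat[OF G(2) Nc]])
  then have "mat_inverse (Zmat p (Y * g)) = Some (?G' * N)"
    using mat_inverse_eq_SomeI[of _ p "?G' * N"] ZYg Zc G Nc G'N ZN by simp
  then have "Phi_star p r M (Y * g) = Phi_numer p r M Y * ?G * (?G' * N)"
    using Phi_star_eq_Phi_numer_mult[OF M r, of p "Y * g"] Phi_numer_mult[OF Y g(1)] Y g by simp
  also have "\<dots> = Phi_numer p r M Y * N"
  proof -
    have "Phi_numer p r M Y \<in> carrier_mat (r - 1) p" using Y by (simp add: Phi_numer_def)
    from assoc_mult_mat[OF this G(1) mult_carrier_mat[OF G(2) Nc]] show ?thesis by (simp add: G'N)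
  qed
  also have "\<dots> = Phi_star p r M Y"
    using Phi_star_eq_Phi_numer_mult[OF M r, of p Y] Y N by simp
  finally show ?thesis .
qed

lemma V_star_del_carrier_det:
  assumes Y: "Y \<in> V_star_del p s" and ps: "p < s"
  shows "Y \<in> carrier_mat (p + s - 1) p" and "det (Zmat p Y) \<noteq> 0"
proof -
  obtain X where X: "X \<in> V_star p s" and YX: "Y = delete_last_row X"
    using Y by (auto simp: V_star_del_def)
  have Xc: "X \<in> carrier_mat (p + s) p" and det: "det (Zmat p X) \<noteq> 0"
    using X by (auto simp: V_star_def U_star_def)
  show "Y \<in> carrier_mat (p + s - 1) p" using Xc by (simp add: YX delete_last_row_def)
  have "row_block Y 0 (p + s - 1) = row_block X 0 (p + s - 1)"
    using Xc by (auto intro!: eq_matI simp: YX delete_last_row_def row_block_def)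
  from Zmat_cong[OF this] ps det show "det (Zmat p Y) \<noteq> 0" by simp
qed

theorem proposition9p3:
  fixes p r s :: nat and M :: "complex mat"
  assumes "p > 0" and "r \<ge> 2" and "s = p + 2 * r" and "M \<in> so_C r"
  shows "(\<forall>X\<in>V_star p s. \<forall>X'\<in>V_star p s.
            delete_last_row X = delete_last_row X' \<longrightarrow> Phi_hat p r M X = Phi_hat p r M X')
    \<and> (\<forall>X\<in>V_star p s. Phi_star p r M (delete_last_row X) = Phi_hat p r M X)
    \<and> (let \<Omega> = {(\<lambda>Y. Phi_star p r M Y $$ (k, l)) | k l. k < r - 1 \<and> l < p}
       in orthogonal_harmonic_family (V_star_del p s) \<Omega>
          \<and> (\<forall>\<phi>\<in>\<Omega>. GL_invariant_on p (V_star_del p s) \<phi>))"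
proof -
  have r: "0 < r" and M: "M \<in> so_C r" using assms(2,4) by auto
  have rows: "dim_row X = 2*p + 2*r" if "X \<in> V_star p s" for X
    using that assms(3) by (auto simp: V_star_def U_star_def)
  have D: "Y \<in> carrier_mat (2*p + 2*r - 1) p \<and> det (Zmat p Y) \<noteq> 0" if "Y \<in> V_star_del p s" for Y
    using V_star_del_carrier_det[OF that] assms(3) r by (simp add: add.assoc)
  have "\<forall>X\<in>V_star p s. \<forall>X'\<in>V_star p s.
      delete_last_row X = delete_last_row X' \<longrightarrow> Phi_hat p r M X = Phi_hat p r M X'"
    using Phi_hat_eq_if_delete_last_row_eq[OF M r] rows by blast
  moreover have "\<forall>X\<in>V_star p s. Phi_star p r M (delete_last_row X) = Phi_hat p r M X"
    using Phi_star_delete_last_row[OF M r] rows by blast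
  moreover have "twice_coord_diff_on (V_star_del p s) (\<lambda>Y. Phi_star p r M Y $$ (k,l))
      \<and> (\<forall>Y\<in>V_star_del p s. tau_eucl (\<lambda>Y. Phi_star p r M Y $$ (k,l)) Y = 0)
      \<and> GL_invariant_on p (V_star_del p s) (\<lambda>Y. Phi_star p r M Y $$ (k,l))"
    if "k < r - 1" "l < p" for k l
    using twice_coord_diff_on_Phi_star[OF M r that D] tau_eucl_Phi_star[OF M r _ _ that]
      Phi_star_mult_invertible[OF M r] D
    by (auto simp: GL_invariant_on_def)
  moreover have "kappa_eucl (\<lambda>Y. Phi_star p r M Y $$ (k,l)) (\<lambda>Y. Phi_star p r M Y $$ (k',l')) Y = 0"
    if "k < r - 1" "l < p" "k' < r - 1" "l' < p" "Y \<in> V_star_del p s" for k l k' l' Y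
    using kappa_eucl_Phi_star[OF M r _ _ that(1-4)] D[OF that(5)] by blast
  ultimately show ?thesis
    unfolding Let_def orthogonal_harmonic_family_def by blast
qed

end
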